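(* Let $n\ge 2$. For a prime $p$, let $X_p$ be the set of matrices in $\mathrm{SL}(n,\mathbb{F}_p)$ whose characteristic polynomial has a monic factor over $\mathbb{F}_p$ of degree between $1$ and $n-1$ with constant term $1$. Then $|X_p|=o(p^{n^2-1})$ as $p\to\infty$. *)

theory Defs
  imports "Jordan_Normal_Form.Char_Poly" "HOL-Library.Landau_Symbols" "HOL-Number_Theory.Cong"
begin

text \<open>Matrices over F_p are represented by integer n x n matrices with entries in {0..<p}
  (canonical residue representatives). Determinant and characteristic polynomial over F_p
  are the reductions mod p of the integer ones (both are polynomial in the entries).\<close>

definition SL_mod :: "nat \<Rightarrow> nat \<Rightarrow> int mat set" where
  "SL_mod n p = {A \<in> carrier_mat n n.
      (\<forall>i<n. \<forall>j<n. 0 \<le> A $$ (i,j) \<and> A $$ (i,j) < int p) \<and> [det A = 1] (mod int p)}"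

text \<open>A monic polynomial f over F_p of degree d divides a polynomial h over F_p iff some lift
  (monic integer polynomial of degree d) f and some integer g satisfy h = f*g coefficientwise mod p.\<close>

definition has_monic_factor_mod :: "nat \<Rightarrow> int poly \<Rightarrow> int poly \<Rightarrow> bool" where
  "has_monic_factor_mod p f h \<longleftrightarrow>
     lead_coeff f = 1 \<and> (\<exists>g :: int poly. \<forall>k. [coeff h k = coeff (f * g) k] (mod int p))"

definition X_set :: "nat \<Rightarrow> nat \<Rightarrow> int mat set" where
  "X_set n p = {A \<in> SL_mod n p. \<exists>f :: int poly.
      1 \<le> degree f \<and> degree f \<le> n - 1 \<and> [coeff f 0 = 1] (mod int p) \<and>
      has_monic_factor_mod p f (char_poly A)}"

end

(*
  Split X_p according to whether the Krylov matrix K(A) = (e_0, A e_0, ..., A^(n-1) e_0) is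
  invertible mod p.

  If it is, A is determined mod p by K(A) and its characteristic polynomial: A K(A) consists of
  the columns 1, ..., n-1 of K(A) followed by A^n e_0, which Cayley-Hamilton expresses through
  K(A) and the characteristic polynomial. Since det A = 1, that polynomial is f g with f monic of
  degree d, f(0) = 1 and g monic of degree n - d, g(0) = (-1)^n, so it is fixed by d and the
  n - 2 middle coefficients of f and g. Column 0 of K(A) is e_0, so there are at most
  (n - 1) p^(n*(n-1) + n - 2) such matrices.

  If K(A) is singular, write A = B + t E + s I mod p, where E is the down-shift matrix and B
  vanishes at (0,0) and (1,0). The determinant of K(A) does not depend on s and is a polynomial
  in t with coefficient 1 in degree n(n-1)/2, while det A = 1 is a monic equation of degree n in
  s. Hence each of the p^(n^2-2) choices of B admits at most n^2(n-1)/2 pairs (s, t).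
  Altogether |X_p| = O(p^(n^2-2)).
*)

theory Submission
  imports Defs "Berlekamp_Zassenhaus.Poly_Mod" "HOL-Real_Asymp.Real_Asymp"
begin

lemma index_mult_mat_sum:
  assumes "A \<in> carrier_mat nr m" "B \<in> carrier_mat m nc" "i < nr" "j < nc"
  shows "(A * B) $$ (i,j) = (\<Sum>k<m. A $$ (i,k) * B $$ (k,j))"
  using assms by (auto simp: scalar_prod_def lessThan_atLeast0 intro!: sum.cong)

lemma pow_mat_Suc_left:
  assumes "A \<in> carrier_mat n n"
  shows "A ^\<^sub>m Suc k = A * A ^\<^sub>m k"
proof (induction k)
  case 0
  show ?case using assms by simp
next
  case (Suc k)
  have "A ^\<^sub>m Suc (Suc k) = (A * A ^\<^sub>m k) * A" using Suc by simp
  also have "\<dots> = A * A ^\<^sub>m Suc k" using assms by (simp add: assoc_mult_mat[of A n n _ n A n])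
  finally show ?case .
qed

lemma sum_binomial_Suc_step:
  fixes X :: "nat \<Rightarrow> 'a::comm_ring_1"
  shows "(\<Sum>l\<le>j. of_nat (j choose l) * s ^ (j - l) * X (Suc l))
           + s * (\<Sum>l\<le>j. of_nat (j choose l) * s ^ (j - l) * X l)
         = (\<Sum>l\<le>Suc j. of_nat (Suc j choose l) * s ^ (Suc j - l) * X l)"
proof -
  define u where "u l j = of_nat (j choose l) * s ^ (j - l)" for l j
  have pascal: "u (Suc l) (Suc j) = u l j + s * u (Suc l) j" for l
  proof (cases "l < j")
    case True
    then have "s ^ (j - l) = s * s ^ (j - Suc l)" by (simp flip: power_Suc add: Suc_diff_Suc)
    then show ?thesis by (simp add: u_def algebra_simps)
  qed (simp add: u_def binomial_eq_0)
  have "(\<Sum>l\<le>Suc j. u l (Suc j) * X l) = u 0 (Suc j) * X 0 + (\<Sum>l\<le>j. u (Suc l) (Suc j) * X (Suc l))"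
    by (rule sum.atMost_Suc_shift)
  also have "\<dots> = (\<Sum>l\<le>j. u l j * X (Suc l)) + (s * u 0 j * X 0 + (\<Sum>l\<le>j. s * u (Suc l) j * X (Suc l)))"
    by (simp add: pascal u_def[of 0] ring_distribs sum.distrib mult_ac)
  also have "s * u 0 j * X 0 + (\<Sum>l\<le>j. s * u (Suc l) j * X (Suc l)) = (\<Sum>l\<le>Suc j. s * u l j * X l)"
    by (rule sum.atMost_Suc_shift[symmetric])
  also have "\<dots> = s * (\<Sum>l\<le>j. u l j * X l)"
    by (simp add: u_def binomial_eq_0 sum_distrib_left mult_ac)
  finally show ?thesis by (simp add: u_def)
qed

lemma index_mult_add_scalar_mat:
  fixes A B :: "'a::comm_ring_1 mat"
  assumes A: "A \<in> carrier_mat n n" and B: "B \<in> carrier_mat n nc" and i: "i < n" and c: "c < nc"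
  shows "((A + s \<cdot>\<^sub>m 1\<^sub>m n) * B) $$ (i,c) = (A * B) $$ (i,c) + s * B $$ (i,c)"
proof -
  have "(A + s \<cdot>\<^sub>m 1\<^sub>m n) * B = A * B + s \<cdot>\<^sub>m B"
    using A B by (simp add: add_mult_distrib_mat[of A n n _ B nc] mult_smult_assoc_mat[of _ n n B nc])
  then show ?thesis using A B i c by simp
qed

lemma index_mult_sum_pow_mat:
  fixes A :: "'a::comm_ring_1 mat"
  assumes A: "A \<in> carrier_mat n n" and i: "i < n" and c: "c < n"
  shows "(\<Sum>m<n. A $$ (i,m) * (\<Sum>l\<in>L. w l * (A ^\<^sub>m l) $$ (m,c)))
           = (\<Sum>l\<in>L. w l * (A ^\<^sub>m Suc l) $$ (i,c))"
proof -
  have pow_Suc: "(A ^\<^sub>m Suc l) $$ (i,c) = (\<Sum>m<n. A $$ (i,m) * (A ^\<^sub>m l) $$ (m,c))" for l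
    unfolding pow_mat_Suc_left[OF A] using A i c by (subst index_mult_mat_sum[of _ n n _ n]) auto
  have "(\<Sum>m<n. A $$ (i,m) * (\<Sum>l\<in>L. w l * (A ^\<^sub>m l) $$ (m,c)))
      = (\<Sum>m<n. \<Sum>l\<in>L. w l * (A $$ (i,m) * (A ^\<^sub>m l) $$ (m,c)))"
    by (simp add: sum_distrib_left mult_ac)
  also have "\<dots> = (\<Sum>l\<in>L. w l * (A ^\<^sub>m Suc l) $$ (i,c))"
    by (subst sum.swap) (simp only: pow_Suc sum_distrib_left)
  finally show ?thesis .
qed

lemma pow_mat_add_scalar_index:
  fixes A :: "'a::comm_ring_1 mat"
  assumes A: "A \<in> carrier_mat n n" and i: "i < n" and c: "c < n"
  shows "((A + s \<cdot>\<^sub>m 1\<^sub>m n) ^\<^sub>m j) $$ (i,c)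
           = (\<Sum>l\<le>j. of_nat (j choose l) * s ^ (j - l) * (A ^\<^sub>m l) $$ (i,c))"
  using i
proof (induction j arbitrary: i)
  case 0
  then show ?case using A c by simp
next
  case (Suc j)
  let ?As = "A + s \<cdot>\<^sub>m 1\<^sub>m n"
  have As: "?As \<in> carrier_mat n n" using A by simp
  have "(?As ^\<^sub>m Suc j) $$ (i,c) = (A * ?As ^\<^sub>m j) $$ (i,c) + s * (?As ^\<^sub>m j) $$ (i,c)"
    unfolding pow_mat_Suc_left[OF As] using A Suc.prems c by (intro index_mult_add_scalar_mat) auto
  also have "(A * ?As ^\<^sub>m j) $$ (i,c)
      = (\<Sum>m<n. A $$ (i,m) * (\<Sum>l\<le>j. of_nat (j choose l) * s ^ (j - l) * (A ^\<^sub>m l) $$ (m,c)))"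
    using A Suc.prems c by (subst index_mult_mat_sum[of _ n n _ n]) (auto simp: Suc.IH)
  also have "\<dots> = (\<Sum>l\<le>j. of_nat (j choose l) * s ^ (j - l) * (A ^\<^sub>m Suc l) $$ (i,c))"
    by (rule index_mult_sum_pow_mat[OF A Suc.prems c])
  also have "(?As ^\<^sub>m j) $$ (i,c) = (\<Sum>l\<le>j. of_nat (j choose l) * s ^ (j - l) * (A ^\<^sub>m l) $$ (i,c))"
    by (rule Suc.IH[OF Suc.prems])
  also have "(\<Sum>l\<le>j. of_nat (j choose l) * s ^ (j - l) * (A ^\<^sub>m Suc l) $$ (i,c))
             + s * (\<Sum>l\<le>j. of_nat (j choose l) * s ^ (j - l) * (A ^\<^sub>m l) $$ (i,c))
           = (\<Sum>l\<le>Suc j. of_nat (Suc j choose l) * s ^ (Suc j - l) * (A ^\<^sub>m l) $$ (i,c))"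
    by (rule sum_binomial_Suc_step)
  finally show ?case .
qed

section \<open>Congruences of integer matrices\<close>

definition mat_cong :: "int \<Rightarrow> int mat \<Rightarrow> int mat \<Rightarrow> bool" where
  "mat_cong m A B \<longleftrightarrow> dim_row A = dim_row B \<and> dim_col A = dim_col B \<and>
     (\<forall>i<dim_row A. \<forall>j<dim_col A. [A $$ (i,j) = B $$ (i,j)] (mod m))"

lemma mat_congI:
  assumes "A \<in> carrier_mat nr nc" "B \<in> carrier_mat nr nc"
    and "\<And>i j. i < nr \<Longrightarrow> j < nc \<Longrightarrow> [A $$ (i,j) = B $$ (i,j)] (mod m)"
  shows "mat_cong m A B"
  using assms unfolding mat_cong_def by auto

lemma mat_congD:
  "mat_cong m A B \<Longrightarrow> i < dim_row A \<Longrightarrow> j < dim_col A \<Longrightarrow> [A $$ (i,j) = B $$ (i,j)] (mod m)"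
  unfolding mat_cong_def by auto

lemma mat_cong_refl [simp]: "mat_cong m A A"
  unfolding mat_cong_def by auto

lemma mat_cong_sym: "mat_cong m A B \<Longrightarrow> mat_cong m B A"
  unfolding mat_cong_def by (auto simp: cong_sym)

lemma mat_cong_trans [trans]: "mat_cong m A B \<Longrightarrow> mat_cong m B C \<Longrightarrow> mat_cong m A C"
  unfolding mat_cong_def by (metis cong_trans)

lemma mat_cong_mult:
  assumes A: "A \<in> carrier_mat nr k" and B: "B \<in> carrier_mat k nc"
    and AA': "mat_cong m A A'" and BB': "mat_cong m B B'"
  shows "mat_cong m (A * B) (A' * B')"
proof -
  have A': "A' \<in> carrier_mat nr k" and B': "B' \<in> carrier_mat k nc"
    using assms unfolding mat_cong_def carrier_mat_def by auto
  show ?thesis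
  proof (rule mat_congI)
    fix i j assume i: "i < nr" and j: "j < nc"
    have "(A * B) $$ (i,j) = (\<Sum>l<k. A $$ (i,l) * B $$ (l,j))"
      using A B i j by (rule index_mult_mat_sum)
    also have "[\<dots> = (\<Sum>l<k. A' $$ (i,l) * B' $$ (l,j))] (mod m)"
      using A B AA' BB' i j by (intro cong_sum cong_mult) (auto intro!: mat_congD)
    also have "(\<Sum>l<k. A' $$ (i,l) * B' $$ (l,j)) = (A' * B') $$ (i,j)"
      using A' B' i j by (rule index_mult_mat_sum[symmetric])
    finally show "[(A * B) $$ (i,j) = (A' * B') $$ (i,j)] (mod m)" .
  qed (use A B A' B' in auto)
qed

lemma mat_cong_pow:
  assumes A: "A \<in> carrier_mat n n" and "mat_cong m A A'"
  shows "mat_cong m (A ^\<^sub>m k) (A' ^\<^sub>m k)"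
proof (induction k)
  case 0
  then show ?case using assms unfolding mat_cong_def by auto
next
  case (Suc k)
  then show ?case using assms by (simp add: mat_cong_mult[of _ n n _ n])
qed

lemma mat_cong_det:
  assumes A: "A \<in> carrier_mat n n" and AA': "mat_cong m A A'"
  shows "[det A = det A'] (mod m)"
proof -
  have A': "A' \<in> carrier_mat n n" using assms unfolding mat_cong_def carrier_mat_def by auto
  have "[(\<Sum>\<pi> | \<pi> permutes {0..<n}. signof \<pi> * (\<Prod>i = 0..<n. A $$ (i, \<pi> i)))
       = (\<Sum>\<pi> | \<pi> permutes {0..<n}. signof \<pi> * (\<Prod>i = 0..<n. A' $$ (i, \<pi> i)))] (mod m)"
  proof (intro cong_sum cong_mult cong_refl cong_prod)
    fix \<pi> i assume \<pi>: "\<pi> \<in> {\<pi>. \<pi> permutes {0..<n}}" and i: "i \<in> {0..<n}"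
    then have "\<pi> i < n" by (auto simp: permutes_in_image)
    then show "[A $$ (i, \<pi> i) = A' $$ (i, \<pi> i)] (mod m)" using A AA' i by (intro mat_congD) auto
  qed
  then show ?thesis using det_def'[OF A] det_def'[OF A'] by simp
qed

lemma mat_cong_cancel_right:
  fixes p :: int
  assumes A: "A \<in> carrier_mat n n" and A': "A' \<in> carrier_mat n n" and K: "K \<in> carrier_mat n n"
    and cong: "mat_cong p (A * K) (A' * K)" and p: "prime p" and invertible: "\<not> p dvd det K"
  shows "mat_cong p A A'"
proof -
  have adj_cancel: "B * K * adj_mat K = det K \<cdot>\<^sub>m B" if B: "B \<in> carrier_mat n n" for B
  proof -
    have "B * K * adj_mat K = B * (K * adj_mat K)"
      using B K adj_mat[OF K] by (simp add: assoc_mult_mat[of _ n n _ n _ n])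
    also have "\<dots> = det K \<cdot>\<^sub>m B"
      using adj_mat[OF K] B by (simp add: mult_smult_distrib[OF B one_carrier_mat])
    finally show ?thesis .
  qed
  have "mat_cong p (A * K * adj_mat K) (A' * K * adj_mat K)"
    by (rule mat_cong_mult[OF _ _ cong mat_cong_refl]) (use A K adj_mat[OF K] in auto)
  then have scaled: "mat_cong p (det K \<cdot>\<^sub>m A) (det K \<cdot>\<^sub>m A')"
    using adj_cancel[OF A] adj_cancel[OF A'] by simp
  show ?thesis
  proof (rule mat_congI[OF A A'])
    fix i j assume "i < n" "j < n"
    then have "[det K * A $$ (i,j) = det K * A' $$ (i,j)] (mod p)"
      using mat_congD[OF scaled] A A' by auto
    then have "p dvd det K * (A $$ (i,j) - A' $$ (i,j))"
      by (simp add: cong_iff_dvd_diff right_diff_distrib)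
    then show "[A $$ (i,j) = A' $$ (i,j)] (mod p)"
      using p invertible by (simp add: prime_dvd_mult_iff cong_iff_dvd_diff)
  qed
qed

section \<open>Cayley--Hamilton, entrywise\<close>

lemma char_poly_matrix_mult_adj_index:
  fixes A :: "'a::comm_ring_1 mat"
  defines "Adj \<equiv> adj_mat (char_poly_matrix A)"
  assumes A: "A \<in> carrier_mat n n" and l: "l < n" and j: "j < n"
  shows "pCons 0 (Adj $$ (l,j)) - (\<Sum>m<n. [:A $$ (l,m):] * Adj $$ (m,j))
           = (if l = j then char_poly A else 0)"
proof -
  let ?C = "char_poly_matrix A"
  have C: "?C \<in> carrier_mat n n" using A by simp
  have Adj: "Adj \<in> carrier_mat n n" using adj_mat[OF C] by (simp add: Adj_def)
  have "(if l = j then char_poly A else 0) = (?C * Adj) $$ (l,j)"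
    using adj_mat[OF C] l j by (simp add: Adj_def char_poly_def)
  also have "\<dots> = (\<Sum>m<n. ?C $$ (l,m) * Adj $$ (m,j))"
    using C Adj l j by (rule index_mult_mat_sum)
  also have "\<dots> = (\<Sum>m<n. (if l = m then pCons 0 (Adj $$ (m,j)) else 0) - [:A $$ (l,m):] * Adj $$ (m,j))"
    using A l by (intro sum.cong) (auto simp: char_poly_matrix_def algebra_simps)
  also have "\<dots> = pCons 0 (Adj $$ (l,j)) - (\<Sum>m<n. [:A $$ (l,m):] * Adj $$ (m,j))"
    using l by (simp add: sum_subtractf)
  finally show ?thesis by simp
qed

lemma cayley_hamilton_index:
  fixes A :: "'a::comm_ring_1 mat"
  assumes A: "A \<in> carrier_mat n n" and i: "i < n" and j: "j < n"
  shows "(\<Sum>k\<le>n. coeff (char_poly A) k * (A ^\<^sub>m k) $$ (i,j)) = 0"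
proof -
  define Adj where "Adj = adj_mat (char_poly_matrix A)"
  define G where "G k = (\<Sum>l<n. (A ^\<^sub>m k) $$ (i,l) * coeff (pCons 0 (Adj $$ (l,j))) k)" for k
  have telescope: "coeff (char_poly A) k * (A ^\<^sub>m k) $$ (i,j) = G k - G (Suc k)" for k
  proof -
    have rel: "coeff (pCons 0 (Adj $$ (l,j))) k - (\<Sum>m<n. A $$ (l,m) * coeff (Adj $$ (m,j)) k)
               = (if l = j then coeff (char_poly A) k else 0)" if "l < n" for l
      using arg_cong[OF char_poly_matrix_mult_adj_index[OF A that j], of "\<lambda>q. coeff q k"]
      by (simp add: Adj_def coeff_sum)
    have "coeff (char_poly A) k * (A ^\<^sub>m k) $$ (i,j)
        = (\<Sum>l<n. (A ^\<^sub>m k) $$ (i,l) * (if l = j then coeff (char_poly A) k else 0))"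
      using j by (simp add: if_distrib[of "\<lambda>x. _ * x"] cong: if_cong)
    also have "\<dots> = G k - (\<Sum>l<n. \<Sum>m<n. (A ^\<^sub>m k) $$ (i,l) * A $$ (l,m) * coeff (Adj $$ (m,j)) k)"
      by (simp add: rel[symmetric] G_def right_diff_distrib sum_subtractf sum_distrib_left mult.assoc)
    also have "(\<Sum>l<n. \<Sum>m<n. (A ^\<^sub>m k) $$ (i,l) * A $$ (l,m) * coeff (Adj $$ (m,j)) k)
             = (\<Sum>m<n. (A ^\<^sub>m Suc k) $$ (i,m) * coeff (Adj $$ (m,j)) k)"
    proof -
      have "(A ^\<^sub>m Suc k) $$ (i,m) = (\<Sum>l<n. (A ^\<^sub>m k) $$ (i,l) * A $$ (l,m))" if "m < n" for m
        using index_mult_mat_sum[of "A ^\<^sub>m k" n n A n i m] A i that by simp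
      then show ?thesis by (subst sum.swap) (simp add: sum_distrib_right)
    qed
    also have "\<dots> = G (Suc k)" by (simp add: G_def)
    finally show ?thesis .
  qed
  define N where "N = Suc (n + (\<Sum>l<n. degree (Adj $$ (l,j))))"
  have "G N = 0"
  proof -
    have "degree (Adj $$ (l,j)) < n + (\<Sum>l<n. degree (Adj $$ (l,j)))" if "l < n" for l
      using member_le_sum[of l "{..<n}" "\<lambda>l. degree (Adj $$ (l,j))"] that i by simp
    then show ?thesis by (simp add: G_def N_def coeff_eq_0)
  qed
  have "(\<Sum>k\<le>n. coeff (char_poly A) k * (A ^\<^sub>m k) $$ (i,j))
      = (\<Sum>k<N. coeff (char_poly A) k * (A ^\<^sub>m k) $$ (i,j))"
    using degree_monic_char_poly[OF A]
    by (intro sum.mono_neutral_left) (auto simp: N_def coeff_eq_0)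
  also have "\<dots> = G 0 - G N" by (simp add: telescope sum_lessThan_telescope')
  finally show ?thesis using \<open>G N = 0\<close> by (simp add: G_def)
qed

lemma cayley_hamilton_top_index:
  fixes A :: "'a::comm_ring_1 mat"
  assumes A: "A \<in> carrier_mat n n" and i: "i < n" and j: "j < n"
  shows "(A ^\<^sub>m n) $$ (i,j) = - (\<Sum>k<n. coeff (char_poly A) k * (A ^\<^sub>m k) $$ (i,j))"
proof -
  have "coeff (char_poly A) n = 1" using degree_monic_char_poly[OF A] by simp
  then show ?thesis using cayley_hamilton_index[OF A i j]
    by (simp add: lessThan_Suc_atMost[symmetric] eq_neg_iff_add_eq_0 add.commute)
qed

section \<open>Krylov matrices\<close>

definition krylov_mat :: "nat \<Rightarrow> 'a::comm_ring_1 mat \<Rightarrow> 'a mat" where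
  "krylov_mat n A = mat n n (\<lambda>(i,j). (A ^\<^sub>m j) $$ (i,0))"

lemma krylov_mat_carrier [simp]: "krylov_mat n A \<in> carrier_mat n n"
  by (simp add: krylov_mat_def)

lemma dim_krylov_mat [simp]: "dim_row (krylov_mat n A) = n" "dim_col (krylov_mat n A) = n"
  by (simp_all add: krylov_mat_def)

lemma index_krylov_mat [simp]: "i < n \<Longrightarrow> j < n \<Longrightarrow> krylov_mat n A $$ (i,j) = (A ^\<^sub>m j) $$ (i,0)"
  by (simp add: krylov_mat_def)

lemma index_mult_krylov_mat:
  assumes A: "A \<in> carrier_mat n n" and i: "i < n" and j: "j < n"
  shows "(A * krylov_mat n A) $$ (i,j) = (A ^\<^sub>m Suc j) $$ (i,0)"
proof -
  have "(A * krylov_mat n A) $$ (i,j) = (\<Sum>l<n. A $$ (i,l) * (A ^\<^sub>m j) $$ (l,0))"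
    using A i j by (subst index_mult_mat_sum[of _ n n _ n]) auto
  also have "\<dots> = (A * A ^\<^sub>m j) $$ (i,0)"
    using A i by (subst index_mult_mat_sum[of _ n n _ n]) auto
  finally show ?thesis using pow_mat_Suc_left[OF A, of j] by simp
qed

lemma mat_cong_krylov_mat:
  assumes A: "A \<in> carrier_mat n n" and AA': "mat_cong m A A'"
  shows "mat_cong m (krylov_mat n A) (krylov_mat n A')"
proof (rule mat_congI[OF krylov_mat_carrier krylov_mat_carrier])
  fix i j assume "i < n" "j < n"
  then show "[krylov_mat n A $$ (i,j) = krylov_mat n A' $$ (i,j)] (mod m)"
    using mat_cong_pow[OF A AA', of j] A by (auto intro: mat_congD)
qed

lemma det_krylov_mat_add_scalar:
  fixes A :: "'a::comm_ring_1 mat"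
  assumes A: "A \<in> carrier_mat n n"
  shows "det (krylov_mat n (A + s \<cdot>\<^sub>m 1\<^sub>m n)) = det (krylov_mat n A)"
proof -
  define U where "U = mat n n (\<lambda>(l,j). of_nat (j choose l) * s ^ (j - l))"
  have U: "U \<in> carrier_mat n n" by (simp add: U_def)
  have "krylov_mat n (A + s \<cdot>\<^sub>m 1\<^sub>m n) = krylov_mat n A * U"
  proof (rule eq_matI)
    fix i j assume "i < dim_row (krylov_mat n A * U)" and "j < dim_col (krylov_mat n A * U)"
    then have i: "i < n" and j: "j < n" using U by auto
    have "(krylov_mat n A * U) $$ (i,j) = (\<Sum>l<n. (A ^\<^sub>m l) $$ (i,0) * (of_nat (j choose l) * s ^ (j - l)))"
      using U i j by (subst index_mult_mat_sum[of _ n n _ n]) (auto simp: U_def)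
    also have "\<dots> = (\<Sum>l\<le>j. of_nat (j choose l) * s ^ (j - l) * (A ^\<^sub>m l) $$ (i,0))"
      using j by (intro sum.mono_neutral_cong_right) (auto simp: mult_ac not_le binomial_eq_0)
    also have "\<dots> = ((A + s \<cdot>\<^sub>m 1\<^sub>m n) ^\<^sub>m j) $$ (i,0)"
      using pow_mat_add_scalar_index[OF A i, of 0] i by simp
    finally show "krylov_mat n (A + s \<cdot>\<^sub>m 1\<^sub>m n) $$ (i,j) = (krylov_mat n A * U) $$ (i,j)"
      using i j by simp
  qed (use U in auto)
  moreover have "det U = 1"
  proof -
    have "upper_triangular U" by (auto simp: upper_triangular_def U_def binomial_eq_0)
    moreover have "diag_mat U = map (\<lambda>_. 1) [0..<n]"
      by (auto simp: diag_mat_def U_def)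
    ultimately show ?thesis using det_upper_triangular[OF _ U] by (simp add: map_replicate_const)
  qed
  ultimately show ?thesis using det_mult[OF krylov_mat_carrier U] by simp
qed

lemma mat_cong_of_krylov_mat:
  assumes A: "A \<in> carrier_mat n n" and A': "A' \<in> carrier_mat n n"
    and K: "mat_cong m (krylov_mat n A) (krylov_mat n A')"
    and chi: "\<And>k. [coeff (char_poly A) k = coeff (char_poly A') k] (mod m)"
    and m: "prime m" and invertible: "\<not> m dvd det (krylov_mat n A)"
  shows "mat_cong m A A'"
proof -
  have col: "[(A ^\<^sub>m k) $$ (i,0) = (A' ^\<^sub>m k) $$ (i,0)] (mod m)" if "i < n" "k < n" for i k
    using mat_congD[OF K, of i k] that by simp
  have "mat_cong m (A * krylov_mat n A) (A' * krylov_mat n A')"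
  proof (rule mat_congI)
    fix i j assume i: "i < n" and j: "j < n"
    have "[(A ^\<^sub>m Suc j) $$ (i,0) = (A' ^\<^sub>m Suc j) $$ (i,0)] (mod m)"
    proof (cases "Suc j < n")
      case True
      then show ?thesis using col i by blast
    next
      case False
      then have "Suc j = n" using j by simp
      moreover have "[(\<Sum>k<n. coeff (char_poly A) k * (A ^\<^sub>m k) $$ (i,0))
                     = (\<Sum>k<n. coeff (char_poly A') k * (A' ^\<^sub>m k) $$ (i,0))] (mod m)"
        using chi col i by (intro cong_sum cong_mult) auto
      ultimately show ?thesis
        using cayley_hamilton_top_index[OF A i] cayley_hamilton_top_index[OF A' i] i
        by (simp add: cong_minus_minus_iff)
    qed
    then show "[(A * krylov_mat n A) $$ (i,j) = (A' * krylov_mat n A') $$ (i,j)] (mod m)"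
      using index_mult_krylov_mat[OF A i j] index_mult_krylov_mat[OF A' i j] by simp
  qed (use A A' in auto)
  also have "mat_cong m (A' * krylov_mat n A') (A' * krylov_mat n A)"
    by (rule mat_cong_mult[OF _ _ mat_cong_refl mat_cong_sym[OF K]]) (use A' in auto)
  finally show ?thesis
    using mat_cong_cancel_right[OF A A' krylov_mat_carrier _ m invertible] by blast
qed

lemma coeff_mult_at_degree_bounds:
  fixes a b :: "'a::comm_semiring_0 poly"
  assumes a: "degree a \<le> da" and b: "degree b \<le> db"
  shows "coeff (a * b) (da + db) = coeff a da * coeff b db"
proof -
  have "coeff a i * coeff b (da + db - i) = 0" if "i \<noteq> da" for i
    using a b that by (cases "i < da") (auto simp: coeff_eq_0)
  then have "(\<Sum>i\<le>da + db. coeff a i * coeff b (da + db - i)) = coeff a da * coeff b (da + db - da)"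
    by (subst sum.remove[of _ da]) auto
  then show ?thesis by (simp add: coeff_mult)
qed

lemma coeff_prod_at_degree_bounds:
  fixes f :: "'b \<Rightarrow> 'a::comm_semiring_1 poly"
  assumes "finite I" and "\<And>i. i \<in> I \<Longrightarrow> degree (f i) \<le> d i"
  shows "degree (prod f I) \<le> sum d I \<and> coeff (prod f I) (sum d I) = (\<Prod>i\<in>I. coeff (f i) (d i))"
  using assms
proof (induction I rule: finite_induct)
  case (insert x I)
  then have "degree (f x) \<le> d x" and IH: "degree (prod f I) \<le> sum d I"
    "coeff (prod f I) (sum d I) = (\<Prod>i\<in>I. coeff (f i) (d i))" by auto
  then have "degree (f x * prod f I) \<le> d x + sum d I"
    using degree_mult_le[of "f x" "prod f I"] by linarith
  then show ?case
    using insert coeff_mult_at_degree_bounds[OF \<open>degree (f x) \<le> d x\<close> IH(1)] IH(2) by simp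
qed simp

text \<open>The identity permutation is the only one reaching the degree bound \<open>\<Sum>j<n. j\<close>.\<close>

lemma det_poly_mat_column_degrees:
  fixes K :: "'a::comm_ring_1 poly mat"
  assumes K: "K \<in> carrier_mat n n"
    and deg: "\<And>i j. i < n \<Longrightarrow> j < n \<Longrightarrow> degree (K $$ (i,j)) \<le> j"
    and top: "\<And>i j. i < n \<Longrightarrow> j < n \<Longrightarrow> coeff (K $$ (i,j)) j = (if i = j then 1 else 0)"
  shows "degree (det K) \<le> (\<Sum>j<n. j) \<and> coeff (det K) (\<Sum>j<n. j) = 1"
proof -
  define P where "P = {\<pi>. \<pi> permutes {0..<n}}"
  have summand: "degree (signof \<pi> * (\<Prod>i = 0..<n. K $$ (i, \<pi> i))) \<le> (\<Sum>j<n. j) \<and>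
      coeff (signof \<pi> * (\<Prod>i = 0..<n. K $$ (i, \<pi> i))) (\<Sum>j<n. j) = (if \<pi> = id then 1 else 0)"
    if "\<pi> \<in> P" for \<pi>
  proof -
    have \<pi>: "\<pi> permutes {0..<n}" using that by (simp add: P_def)
    have \<pi>_lt: "\<pi> i < n" if "i < n" for i using \<pi> that by (auto simp: permutes_in_image)
    have sum_\<pi>: "(\<Sum>i = 0..<n. \<pi> i) = (\<Sum>j<n. j)"
      using sum.permute[OF \<pi>, of "\<lambda>i. i"] by (simp add: lessThan_atLeast0 comp_def)
    have "(\<Prod>i = 0..<n. coeff (K $$ (i, \<pi> i)) (\<pi> i)) = (if \<pi> = id then 1 else 0)"
    proof (cases "\<pi> = id")
      case False
      then obtain i where i: "\<pi> i \<noteq> i" by (meson eq_id_iff)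
      then have "i < n" using \<pi> by (meson atLeastLessThan_iff permutes_not_in zero_le)
      then have "coeff (K $$ (i, \<pi> i)) (\<pi> i) = 0" using top[OF _ \<pi>_lt] i by simp
      then have "(\<Prod>i = 0..<n. coeff (K $$ (i, \<pi> i)) (\<pi> i)) = 0"
        using \<open>i < n\<close> by (intro prod_zero bexI[of _ i]) auto
      then show ?thesis using False by simp
    qed (simp add: top)
    moreover have "degree (\<Prod>i = 0..<n. K $$ (i, \<pi> i)) \<le> (\<Sum>i = 0..<n. \<pi> i) \<and>
        coeff (\<Prod>i = 0..<n. K $$ (i, \<pi> i)) (\<Sum>i = 0..<n. \<pi> i) = (\<Prod>i = 0..<n. coeff (K $$ (i, \<pi> i)) (\<pi> i))"
      using deg \<pi>_lt by (intro coeff_prod_at_degree_bounds) auto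
    ultimately show ?thesis using sum_\<pi> by (auto simp: sign_def)
  qed
  have det_K: "det K = (\<Sum>\<pi>\<in>P. signof \<pi> * (\<Prod>i = 0..<n. K $$ (i, \<pi> i)))"
    using det_def'[OF K] by (simp add: P_def)
  have "finite P" unfolding P_def by (rule finite_permutations) auto
  have "degree (det K) \<le> (\<Sum>j<n. j)"
    unfolding det_K using summand \<open>finite P\<close> by (intro degree_sum_le) auto
  moreover have "coeff (det K) (\<Sum>j<n. j) = (\<Sum>\<pi>\<in>P. if \<pi> = id then 1 else 0)"
    unfolding det_K coeff_sum using summand by (intro sum.cong) auto
  moreover have "id \<in> P" by (simp add: P_def permutes_id)
  ultimately show ?thesis using \<open>finite P\<close> by (simp add: sum.delta')
qed

definition down_shift_mat :: "nat \<Rightarrow> 'a::{zero,one} mat" where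
  "down_shift_mat n = mat n n (\<lambda>(i,j). if i = Suc j then 1 else 0)"

lemma down_shift_mat_carrier [simp]: "down_shift_mat n \<in> carrier_mat n n"
  by (simp add: down_shift_mat_def)

lemma pow_mat_linear_down_shift_index:
  fixes P :: "'a::comm_ring_1 poly mat"
  assumes P: "P \<in> carrier_mat n n"
    and deg: "\<And>i m. i < n \<Longrightarrow> m < n \<Longrightarrow> degree (P $$ (i,m)) \<le> 1"
    and lin: "\<And>i m. i < n \<Longrightarrow> m < n \<Longrightarrow> coeff (P $$ (i,m)) 1 = (if i = Suc m then 1 else 0)"
    and i: "i < n"
  shows "degree ((P ^\<^sub>m j) $$ (i,0)) \<le> j \<and> coeff ((P ^\<^sub>m j) $$ (i,0)) j = (if i = j then 1 else 0)"
  using i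
proof (induction j arbitrary: i)
  case 0
  then show ?case using P by simp
next
  case (Suc j)
  have entry: "(P ^\<^sub>m Suc j) $$ (i,0) = (\<Sum>m<n. P $$ (i,m) * (P ^\<^sub>m j) $$ (m,0))"
    using P Suc.prems pow_mat_Suc_left[OF P, of j] by (subst index_mult_mat_sum[of _ n n _ n, symmetric]) auto
  have summand: "degree (P $$ (i,m) * (P ^\<^sub>m j) $$ (m,0)) \<le> Suc j \<and>
      coeff (P $$ (i,m) * (P ^\<^sub>m j) $$ (m,0)) (Suc j) = (if i = Suc m \<and> m = j then 1 else 0)"
    if m: "m < n" for m
    using degree_mult_le[of "P $$ (i,m)" "(P ^\<^sub>m j) $$ (m,0)"] deg[OF Suc.prems m] Suc.IH[OF m]
      coeff_mult_at_degree_bounds[OF deg[OF Suc.prems m], of "(P ^\<^sub>m j) $$ (m,0)" j]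
      lin[OF Suc.prems m]
    by auto
  have "(\<Sum>m<n. if i = Suc m \<and> m = j then 1 else 0)
      = (\<Sum>m<n. if m = j then (if i = Suc j then 1 else 0) else (0::'a))"
    by (intro sum.cong) auto
  also have "\<dots> = (if i = Suc j then 1 else 0)"
    using Suc.prems by (auto simp: sum.delta)
  finally have delta: "(\<Sum>m<n. if i = Suc m \<and> m = j then 1 else 0) = (if i = Suc j then 1 else (0::'a))" .
  have "degree (\<Sum>m<n. P $$ (i,m) * (P ^\<^sub>m j) $$ (m,0)) \<le> Suc j"
    using summand by (intro degree_sum_le) auto
  moreover have "coeff (\<Sum>m<n. P $$ (i,m) * (P ^\<^sub>m j) $$ (m,0)) (Suc j)
      = (\<Sum>m<n. if i = Suc m \<and> m = j then 1 else 0)"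
    unfolding coeff_sum using summand by (intro sum.cong) auto
  ultimately show ?case unfolding entry delta by simp
qed

lemma det_krylov_mat_add_down_shift_poly:
  fixes B :: "'a::comm_ring_1 mat"
  assumes B: "B \<in> carrier_mat n n"
  obtains q where "degree q \<le> (\<Sum>j<n. j)" and "coeff q (\<Sum>j<n. j) = 1"
    and "\<And>t. poly q t = det (krylov_mat n (B + t \<cdot>\<^sub>m down_shift_mat n))"
proof
  define P where "P = mat n n (\<lambda>(i,j). [:B $$ (i,j), if i = Suc j then 1 else 0:])"
  have P: "P \<in> carrier_mat n n" by (simp add: P_def)
  have "degree ((P ^\<^sub>m j) $$ (i,0)) \<le> j \<and> coeff ((P ^\<^sub>m j) $$ (i,0)) j = (if i = j then 1 else 0)"
    if "i < n" for i j
    using that by (intro pow_mat_linear_down_shift_index[OF P]) (auto simp: P_def)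
  then show "degree (det (krylov_mat n P)) \<le> (\<Sum>j<n. j)" and "coeff (det (krylov_mat n P)) (\<Sum>j<n. j) = 1"
    using det_poly_mat_column_degrees[OF krylov_mat_carrier, of n P] by auto
  fix t
  have "map_mat (\<lambda>q. poly q t) (P ^\<^sub>m j) = (map_mat (\<lambda>q. poly q t) P) ^\<^sub>m j" for j
    by (rule semiring_hom.mat_hom_pow[OF poly_hom.semiring_hom_axioms P])
  moreover have "map_mat (\<lambda>q. poly q t) P = B + t \<cdot>\<^sub>m down_shift_mat n"
    using B by (intro eq_matI) (auto simp: P_def down_shift_mat_def)
  moreover have "poly ((P ^\<^sub>m j) $$ (i,0)) t = map_mat (\<lambda>q. poly q t) (P ^\<^sub>m j) $$ (i,0)"
    if "i < n" for i j
    using P that by simp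
  ultimately have "poly ((P ^\<^sub>m j) $$ (i,0)) t = ((B + t \<cdot>\<^sub>m down_shift_mat n) ^\<^sub>m j) $$ (i,0)"
    if "i < n" for i j
    using that by simp
  then show "poly (det (krylov_mat n P)) t = det (krylov_mat n (B + t \<cdot>\<^sub>m down_shift_mat n))"
    by (intro poly_det_cong[of _ n]) auto
qed

lemma det_add_scalar_eq_poly_char_poly:
  fixes A :: "'a::comm_ring_1 mat"
  assumes A: "A \<in> carrier_mat n n"
  shows "det (A + s \<cdot>\<^sub>m 1\<^sub>m n) = poly (char_poly (- A)) s"
  unfolding char_poly_def
  by (rule poly_det_cong[symmetric, of _ n]) (use A in \<open>auto simp: char_poly_matrix_def\<close>)

lemma coeff_0_char_poly:
  fixes A :: "'a::comm_ring_1 mat"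
  assumes A: "A \<in> carrier_mat n n"
  shows "coeff (char_poly A) 0 = (-1) ^ n * det A"
proof -
  have "coeff (char_poly A) 0 = poly (char_poly (- (- A))) 0" by (simp add: poly_0_coeff_0)
  also have "\<dots> = det (- A + 0 \<cdot>\<^sub>m 1\<^sub>m n)"
    using A by (intro det_add_scalar_eq_poly_char_poly[symmetric]) simp
  also have "- A + 0 \<cdot>\<^sub>m 1\<^sub>m n = (-1) \<cdot>\<^sub>m A" using A by (intro eq_matI) auto
  finally show ?thesis using A by simp
qed

section \<open>Polynomials modulo a prime\<close>

lemma synthetic_div_nonzero_mod:
  fixes q :: "int poly"
  assumes nonzero: "\<not> m dvd coeff q k" and root: "m dvd poly q a"
  shows "\<exists>k'. \<not> m dvd coeff (synthetic_div q a) k'"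
proof (rule ccontr)
  define r where "r = synthetic_div q a"
  assume "\<not> (\<exists>k'. \<not> m dvd coeff (synthetic_div q a) k')"
  then have "m dvd coeff ([:-a, 1:] * r) k" by (cases k) (simp_all add: r_def)
  moreover have "m dvd coeff [:poly q a:] k" using root by (cases k) auto
  moreover have "q = [:-a, 1:] * r + [:poly q a:]"
    unfolding r_def by (rule synthetic_div_correct'[symmetric])
  ultimately have "m dvd coeff q k" by (metis coeff_add dvd_add)
  with nonzero show False ..
qed

lemma roots_mod_prime_subset_synthetic_div:
  fixes q :: "int poly" and p :: nat
  assumes p: "prime p" and a: "a \<in> {0..<int p}" and root: "int p dvd poly q a"
  shows "{x \<in> {0..<int p}. int p dvd poly q x}
           \<subseteq> insert a {x \<in> {0..<int p}. int p dvd poly (synthetic_div q a) x}"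
proof
  define r where "r = synthetic_div q a"
  fix x assume x: "x \<in> {x \<in> {0..<int p}. int p dvd poly q x}"
  show "x \<in> insert a {x \<in> {0..<int p}. int p dvd poly (synthetic_div q a) x}"
  proof (cases "x = a")
    case False
    have q_eq: "q = [:-a, 1:] * r + [:poly q a:]"
      unfolding r_def by (rule synthetic_div_correct'[symmetric])
    have "poly q x = (x - a) * poly r x + poly q a"
      by (subst q_eq) (simp add: algebra_simps)
    then have "int p dvd (x - a) * poly r x" using x root by (simp add: dvd_add_left_iff)
    moreover have "\<not> int p dvd (x - a)"
    proof
      assume "int p dvd (x - a)"
      then have "[x = a] (mod int p)" by (simp add: cong_iff_dvd_diff)
      then have "x = a" using x a by (intro cong_less_imp_eq_int) auto
      with False show False ..
    qed
    moreover have "prime (int p)" using p by simp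
    ultimately have "int p dvd poly r x" by (simp add: prime_dvd_mult_iff)
    then show ?thesis using x by (simp add: r_def)
  qed simp
qed

lemma card_roots_mod_prime_le_degree:
  fixes q :: "int poly" and p :: nat
  assumes p: "prime p" and nonzero: "\<not> int p dvd coeff q k"
  shows "card {x \<in> {0..<int p}. int p dvd poly q x} \<le> degree q"
  using nonzero
proof (induction "degree q" arbitrary: q k rule: less_induct)
  case less
  define R where "R q = {x \<in> {0..<int p}. int p dvd poly q x}" for q :: "int poly"
  have finite_R: "finite (R r)" for r
    by (rule finite_subset[of _ "{0..<int p}"]) (auto simp: R_def)
  have "card (R q) \<le> degree q"
  proof (cases "R q = {}")
    case False
    then obtain a where a: "a \<in> {0..<int p}" "int p dvd poly q a" by (auto simp: R_def)
    define r where "r = synthetic_div q a"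
    obtain k' where "\<not> int p dvd coeff r k'"
      using synthetic_div_nonzero_mod[OF less.prems a(2)] by (auto simp: r_def)
    moreover from this have "r \<noteq> 0" by auto
    then have deg_r: "degree r < degree q" by (simp add: r_def synthetic_div_eq_0_iff degree_synthetic_div)
    ultimately have "card (R r) \<le> degree r" using less.hyps by (simp add: R_def)
    moreover have "R q \<subseteq> insert a (R r)"
      using roots_mod_prime_subset_synthetic_div[OF p a] by (simp add: R_def r_def)
    then have "card (R q) \<le> Suc (card (R r))"
      using card_mono[OF _ \<open>R q \<subseteq> _\<close>] by (simp add: finite_R card_insert_if split: if_splits)
    ultimately show ?thesis using deg_r by simp
  qed simp
  then show ?case by (simp add: R_def)
qed

context poly_mod
begin

lemma Mp_eqI_middle_coeffs:
  assumes "degree (Mp f) = d" and "degree (Mp f') = d"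
    and "coeff (Mp f) 0 = coeff (Mp f') 0" and "coeff (Mp f) d = coeff (Mp f') d"
    and "\<And>k. 0 < k \<Longrightarrow> k < d \<Longrightarrow> M (coeff f k) = M (coeff f' k)"
  shows "Mp f = Mp f'"
proof (rule poly_eqI)
  fix k
  show "coeff (Mp f) k = coeff (Mp f') k"
  proof (cases "d < k")
    case True
    then show ?thesis using assms(1,2) by (simp add: coeff_eq_0)
  next
    case False
    then show ?thesis using assms(3-5) by (cases "k = 0"; cases "k = d") (auto simp: Mp_coeff)
  qed
qed

end

context poly_mod_2
begin

lemma monic_cofactor:
  assumes f: "monic f" and h: "monic h" and fg: "Mp h = Mp (f * g)"
  shows "monic (Mp g) \<and> degree (Mp g) = degree h - degree f"
proof -
  define G where "G = Mp g"
  have hG: "Mp h = Mp (f * G)" using fg by (simp add: G_def)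
  have "Mp h \<noteq> 0" using monic_Mp[OF h] by auto
  then have "G \<noteq> 0" using hG by auto
  have M_G: "M (lead_coeff G) = lead_coeff G" by (simp add: G_def Mp_coeff)
  have "f \<noteq> 0" using f by auto
  then have deg_fG: "degree (f * G) = degree f + degree G"
    using \<open>G \<noteq> 0\<close> by (rule degree_mult_eq)
  have lead_fG: "lead_coeff (f * G) = lead_coeff G" using f by (simp add: lead_coeff_mult)
  have deg_Mp_fG: "degree (Mp (f * G)) = degree (f * G)"
    using lead_fG M_G \<open>G \<noteq> 0\<close> m1 by (intro degree_m_eq) (auto simp: M_def)
  then have "degree h = degree f + degree G" using hG deg_fG h by (metis monic_degree_m)
  moreover have "lead_coeff G = 1"
  proof -
    have "lead_coeff G = coeff (Mp (f * G)) (degree (Mp (f * G)))"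
      using deg_Mp_fG lead_fG M_G by (simp add: Mp_coeff)
    also have "\<dots> = 1" using monic_Mp[OF h] hG by simp
    finally show ?thesis .
  qed
  ultimately show ?thesis by (simp add: G_def)
qed

end

definition char_poly_split :: "nat \<Rightarrow> nat \<Rightarrow> int mat \<Rightarrow> int poly \<Rightarrow> int poly \<Rightarrow> bool" where
  "char_poly_split n p A f g \<longleftrightarrow> monic f \<and> 1 \<le> degree f \<and> degree f \<le> n - 1 \<and>
     [coeff f 0 = 1] (mod int p) \<and> poly_mod.Mp (int p) (char_poly A) = poly_mod.Mp (int p) (f * g)"

lemma X_set_char_poly_split:
  obtains f g where "\<And>A. A \<in> X_set n p \<Longrightarrow> char_poly_split n p A (f A) (g A)"
proof -
  have "\<exists>fg. char_poly_split n p A (fst fg) (snd fg)" if A: "A \<in> X_set n p" for A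
  proof -
    obtain f g where f: "1 \<le> degree f" "degree f \<le> n - 1" "[coeff f 0 = 1] (mod int p)" "monic f"
      and fg: "\<And>k. [coeff (char_poly A) k = coeff (f * g) k] (mod int p)"
      using A by (auto simp: X_set_def has_monic_factor_mod_def)
    have "poly_mod.Mp (int p) (char_poly A) = poly_mod.Mp (int p) (f * g)"
      using fg by (intro poly_eqI) (simp add: poly_mod.Mp_coeff poly_mod.M_def Cong.cong_def)
    with f show ?thesis by (intro exI[of _ "(f, g)"]) (simp add: char_poly_split_def)
  qed
  then obtain fg where "\<And>A. A \<in> X_set n p \<Longrightarrow> char_poly_split n p A (fst (fg A)) (snd (fg A))"
    by metis
  then show ?thesis by (intro that) auto
qed

lemma cofactor_of_char_poly_split:
  assumes p: "prime p" and A: "A \<in> SL_mod n p" and split: "char_poly_split n p A f g"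
  shows "monic (poly_mod.Mp (int p) g) \<and> degree (poly_mod.Mp (int p) g) = n - degree f \<and>
         coeff (poly_mod.Mp (int p) g) 0 = (-1) ^ n mod int p"
proof -
  interpret poly_mod_2 "int p" using prime_gt_1_nat[OF p] by unfold_locales simp
  have A_carrier: "A \<in> carrier_mat n n" and det_A: "[det A = 1] (mod int p)"
    using A by (auto simp: SL_mod_def)
  have f: "monic f" "M (coeff f 0) = 1" and fg: "Mp (char_poly A) = Mp (f * g)"
    using split M_1 by (auto simp: char_poly_split_def M_def Cong.cong_def)
  have char: "monic (char_poly A)" "degree (char_poly A) = n"
    using degree_monic_char_poly[OF A_carrier] by auto
  have "monic (Mp g) \<and> degree (Mp g) = n - degree f"
    using monic_cofactor[OF f(1) char(1) fg] unfolding char(2) .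
  moreover have "coeff (Mp g) 0 = M ((-1) ^ n)"
  proof -
    have "M (coeff g 0) = M (M (coeff f 0) * coeff g 0)" using f(2) by simp
    also have "\<dots> = coeff (Mp (f * g)) 0" by (simp add: Mp_coeff coeff_mult)
    also have "\<dots> = M ((-1) ^ n * det A)"
      using fg coeff_0_char_poly[OF A_carrier] by (metis Mp_coeff)
    also have "\<dots> = M ((-1) ^ n)"
      using det_A unfolding Cong.cong_def M_def by (metis mod_mult_right_eq mult.right_neutral)
    finally show ?thesis by (simp add: Mp_coeff)
  qed
  ultimately show ?thesis unfolding M_def by blast
qed

lemma char_poly_mod_eq_of_splits:
  assumes p: "prime p" and A: "A \<in> SL_mod n p" and A': "A' \<in> SL_mod n p"
    and split: "char_poly_split n p A f g" and split': "char_poly_split n p A' f' g'"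
    and deg: "degree f' = degree f"
    and f_f': "\<And>k. 0 < k \<Longrightarrow> k < degree f \<Longrightarrow> [coeff f k = coeff f' k] (mod int p)"
    and g_g': "\<And>k. 0 < k \<Longrightarrow> k < n - degree f \<Longrightarrow> [coeff g k = coeff g' k] (mod int p)"
  shows "poly_mod.Mp (int p) (char_poly A) = poly_mod.Mp (int p) (char_poly A')"
proof -
  interpret poly_mod_2 "int p" using prime_gt_1_nat[OF p] by unfold_locales simp
  have f: "monic f" "monic f'" "M (coeff f 0) = 1" "M (coeff f' 0) = 1"
    using split split' M_1 by (auto simp: char_poly_split_def M_def Cong.cong_def)
  have "Mp f = Mp f'"
    using f deg f_f' by (intro Mp_eqI_middle_coeffs[where d = "degree f"]) (auto simp: Mp_coeff M_def Cong.cong_def)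
  moreover have "Mp g = Mp g'"
    using cofactor_of_char_poly_split[OF p A split] cofactor_of_char_poly_split[OF p A' split'] deg g_g'
    by (intro Mp_eqI_middle_coeffs[where d = "n - degree f"]) (auto simp: M_def Cong.cong_def)
  ultimately have "Mp (f * g) = Mp (f' * g')" by (metis mult_Mp)
  then show ?thesis using split split' by (simp add: char_poly_split_def)
qed

section \<open>Counting\<close>

lemma SL_mod_eq_of_mat_cong:
  assumes "A \<in> SL_mod n p" and "A' \<in> SL_mod n p" and "mat_cong (int p) A A'"
  shows "A = A'"
proof (rule eq_matI)
  fix i j assume "i < dim_row A'" "j < dim_col A'"
  then have ij: "i < n" "j < n" using assms(2) by (auto simp: SL_mod_def)
  then have "[A $$ (i,j) = A' $$ (i,j)] (mod int p)"
    using assms(1,3) by (intro mat_congD) (auto simp: SL_mod_def)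
  then show "A $$ (i,j) = A' $$ (i,j)"
    by (rule cong_less_imp_eq_int[rotated 4]) (use assms ij in \<open>auto simp: SL_mod_def\<close>)
qed (use assms in \<open>auto simp: SL_mod_def\<close>)

lemma SL_mod_eq_of_split_data:
  assumes p: "prime p" and A: "A \<in> SL_mod n p" and A': "A' \<in> SL_mod n p"
    and split: "char_poly_split n p A f g" and split': "char_poly_split n p A' f' g'"
    and deg: "degree f' = degree f"
    and f_f': "\<And>k. 0 < k \<Longrightarrow> k < degree f \<Longrightarrow> [coeff f k = coeff f' k] (mod int p)"
    and g_g': "\<And>k. 0 < k \<Longrightarrow> k < n - degree f \<Longrightarrow> [coeff g k = coeff g' k] (mod int p)"
    and K: "\<And>i j. i < n \<Longrightarrow> 0 < j \<Longrightarrow> j < n \<Longrightarrow>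
              [krylov_mat n A $$ (i,j) = krylov_mat n A' $$ (i,j)] (mod int p)"
    and invertible: "\<not> int p dvd det (krylov_mat n A)"
  shows "A = A'"
proof -
  have carrier: "A \<in> carrier_mat n n" "A' \<in> carrier_mat n n" using A A' by (auto simp: SL_mod_def)
  have Mp_eq: "poly_mod.Mp (int p) (char_poly A) = poly_mod.Mp (int p) (char_poly A')"
    by (rule char_poly_mod_eq_of_splits[OF p A A' split split' deg f_f' g_g'])
  have chi: "[coeff (char_poly A) k = coeff (char_poly A') k] (mod int p)" for k
    using arg_cong[OF Mp_eq, of "\<lambda>q. coeff q k"] by (simp add: poly_mod.Mp_coeff poly_mod.M_def Cong.cong_def)
  have "mat_cong (int p) (krylov_mat n A) (krylov_mat n A')"
  proof (rule mat_congI[OF krylov_mat_carrier krylov_mat_carrier])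
    fix i j assume "i < n" "j < n"
    with K carrier show "[krylov_mat n A $$ (i,j) = krylov_mat n A' $$ (i,j)] (mod int p)"
      by (cases "j = 0") auto
  qed
  moreover have "prime (int p)" using p by simp
  ultimately have "mat_cong (int p) A A'"
    using mat_cong_of_krylov_mat[OF carrier _ chi _ invertible] by blast
  then show ?thesis using A A' by (rule SL_mod_eq_of_mat_cong[rotated 2])
qed

lemma cong_of_restrict_mod_eq:
  assumes "restrict (\<lambda>x. F x mod m) S = restrict (\<lambda>x. G x mod m) S" and "x \<in> S"
  shows "[F x = G x] (mod m)"
  using fun_cong[OF assms(1), of x] assms(2) by (simp add: Cong.cong_def)

definition split_invariants ::
    "nat \<Rightarrow> nat \<Rightarrow> int mat \<Rightarrow> int poly \<Rightarrow> int poly \<Rightarrow> nat \<times> (nat \<Rightarrow> int) \<times> (nat \<Rightarrow> int) \<times> (nat \<times> nat \<Rightarrow> int)"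
  where "split_invariants n p A f g =
    (degree f,
     restrict (\<lambda>k. coeff f k mod int p) {1..<degree f},
     restrict (\<lambda>k. coeff g k mod int p) {1..<n - degree f},
     restrict (\<lambda>ij. krylov_mat n A $$ ij mod int p) ({0..<n} \<times> {1..<n}))"

lemma SL_mod_eq_of_split_invariants:
  assumes p: "prime p" and A: "A \<in> SL_mod n p" and A': "A' \<in> SL_mod n p"
    and split: "char_poly_split n p A f g" and split': "char_poly_split n p A' f' g'"
    and invertible: "\<not> int p dvd det (krylov_mat n A)"
    and eq: "split_invariants n p A f g = split_invariants n p A' f' g'"
  shows "A = A'"
proof -
  from eq have deg: "degree f' = degree f" by (simp add: split_invariants_def)
  with eq have f_eq: "restrict (\<lambda>k. coeff f k mod int p) {1..<degree f}
                      = restrict (\<lambda>k. coeff f' k mod int p) {1..<degree f}"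
    and g_eq: "restrict (\<lambda>k. coeff g k mod int p) {1..<n - degree f}
               = restrict (\<lambda>k. coeff g' k mod int p) {1..<n - degree f}"
    and K_eq: "restrict (\<lambda>ij. krylov_mat n A $$ ij mod int p) ({0..<n} \<times> {1..<n})
               = restrict (\<lambda>ij. krylov_mat n A' $$ ij mod int p) ({0..<n} \<times> {1..<n})"
    by (simp_all add: split_invariants_def)
  show ?thesis
  proof (rule SL_mod_eq_of_split_data[OF p A A' split split' deg _ _ _ invertible])
    show "[coeff f k = coeff f' k] (mod int p)" if "0 < k" "k < degree f" for k
      using cong_of_restrict_mod_eq[OF f_eq] that by simp
    show "[coeff g k = coeff g' k] (mod int p)" if "0 < k" "k < n - degree f" for k
      using cong_of_restrict_mod_eq[OF g_eq] that by simp
    show "[krylov_mat n A $$ (i,j) = krylov_mat n A' $$ (i,j)] (mod int p)"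
      if "i < n" "0 < j" "j < n" for i j
      using cong_of_restrict_mod_eq[OF K_eq, of "(i,j)"] that by simp
  qed
qed

lemma split_invariants_mem:
  assumes p: "prime p" and split: "char_poly_split n p A f g"
  defines "V \<equiv> {0..<int p}"
  shows "split_invariants n p A f g \<in> (SIGMA d:{1..n - 1}.
           PiE {1..<d} (\<lambda>_. V) \<times> PiE {1..<n - d} (\<lambda>_. V) \<times> PiE ({0..<n} \<times> {1..<n}) (\<lambda>_. V))"
proof -
  have "x mod int p \<in> V" for x using prime_gt_0_nat[OF p] by (simp add: V_def)
  then show ?thesis
    using split by (auto simp: split_invariants_def char_poly_split_def restrict_PiE_iff)
qed

lemma card_split_invariants_space:
  assumes "finite V" and n: "2 \<le> n"
  shows "card (SIGMA d:{1..n - 1}. PiE {1..<d} (\<lambda>_. V) \<times> PiE {1..<n - d} (\<lambda>_. V)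
                 \<times> PiE ({0..<n} \<times> {1..<n}) (\<lambda>_. V)) = (n - 1) * card V ^ (n * n - 2)"
proof -
  have "card (PiE {1..<d} (\<lambda>_. V) \<times> PiE {1..<n - d} (\<lambda>_. V) \<times> PiE ({0..<n} \<times> {1..<n}) (\<lambda>_. V))
      = card V ^ (n * n - 2)" if "d \<in> {1..n - 1}" for d
  proof -
    have "(d - 1) + ((n - d - 1) + n * (n - 1)) = n * n - 2"
      using that n by (simp add: algebra_simps diff_mult_distrib2) (use le_square[of n] in linarith)
    then show ?thesis
      by (simp add: card_cartesian_product card_PiE power_add[symmetric] del: power_add)
  qed
  then show ?thesis using assms by (subst card_SigmaI) (auto intro!: finite_PiE)
qed

lemma card_X_set_krylov_invertible_le:
  assumes n: "2 \<le> n" and p: "prime p"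
  shows "card {A \<in> X_set n p. \<not> int p dvd det (krylov_mat n A)} \<le> (n - 1) * p ^ (n * n - 2)"
proof -
  define S where "S = {A \<in> X_set n p. \<not> int p dvd det (krylov_mat n A)}"
  define V where "V = {0..<int p}"
  obtain f g where split: "\<And>A. A \<in> X_set n p \<Longrightarrow> char_poly_split n p A (f A) (g A)"
    using X_set_char_poly_split by blast
  have SL: "A \<in> SL_mod n p" if "A \<in> S" for A using that by (simp add: S_def X_set_def)
  have "inj_on (\<lambda>A. split_invariants n p A (f A) (g A)) S"
    using SL_mod_eq_of_split_invariants[OF p SL SL split split] by (auto simp: S_def intro!: inj_onI)
  moreover have "(\<lambda>A. split_invariants n p A (f A) (g A)) ` S \<subseteq> (SIGMA d:{1..n - 1}.
      PiE {1..<d} (\<lambda>_. V) \<times> PiE {1..<n - d} (\<lambda>_. V) \<times> PiE ({0..<n} \<times> {1..<n}) (\<lambda>_. V))"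
    unfolding V_def by (intro image_subsetI split_invariants_mem[OF p split]) (simp add: S_def)
  ultimately have "card S \<le> card (SIGMA d:{1..n - 1}.
      PiE {1..<d} (\<lambda>_. V) \<times> PiE {1..<n - d} (\<lambda>_. V) \<times> PiE ({0..<n} \<times> {1..<n}) (\<lambda>_. V))"
    by (intro card_inj_on_le) (auto simp: V_def intro!: finite_PiE)
  also have "\<dots> = (n - 1) * p ^ (n * n - 2)"
    using card_split_invariants_space[of V n] n by (simp add: V_def)
  finally show ?thesis by (simp add: S_def)
qed

lemma card_mats_vanishing_on_le:
  assumes V: "finite V" and Z: "Z \<subseteq> {0..<n} \<times> {0..<n}"
  defines "M \<equiv> {B \<in> carrier_mat n n. (\<forall>i<n. \<forall>j<n. B $$ (i,j) \<in> V) \<and> (\<forall>(i,j)\<in>Z. B $$ (i,j) = 0)}"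
  shows "finite M \<and> card M \<le> card V ^ (n * n - card Z)"
proof -
  define I where "I = {0..<n} \<times> {0..<n} - Z"
  define \<psi> where "\<psi> B = restrict (\<lambda>(i,j). B $$ (i,j)) I" for B :: "'a mat"
  have "inj_on \<psi> M"
  proof (rule inj_onI)
    fix B B' assume B: "B \<in> M" and B': "B' \<in> M" and eq: "\<psi> B = \<psi> B'"
    show "B = B'"
    proof (rule eq_matI)
      fix i j assume "i < dim_row B'" "j < dim_col B'"
      then show "B $$ (i,j) = B' $$ (i,j)"
        using B B' fun_cong[OF eq, of "(i,j)"] by (cases "(i,j) \<in> Z") (auto simp: M_def I_def \<psi>_def)
    qed (use B B' in \<open>auto simp: M_def\<close>)
  qed
  moreover have "\<psi> ` M \<subseteq> PiE I (\<lambda>_. V)"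
  proof (rule image_subsetI)
    fix B assume "B \<in> M"
    then show "\<psi> B \<in> PiE I (\<lambda>_. V)" unfolding \<psi>_def restrict_PiE_iff by (auto simp: M_def I_def)
  qed
  moreover have "finite (PiE I (\<lambda>_. V))" using V by (simp add: I_def finite_PiE)
  moreover have "card (PiE I (\<lambda>_. V)) = card V ^ (n * n - card Z)"
    using Z by (simp add: card_PiE I_def card_Diff_subset finite_subset card_cartesian_product)
  ultimately show ?thesis by (metis card_inj_on_le inj_on_finite)
qed

lemma finite_SL_mod: "finite (SL_mod n p)"
proof -
  have "SL_mod n p \<subseteq> {B \<in> carrier_mat n n. (\<forall>i<n. \<forall>j<n. B $$ (i,j) \<in> {0..<int p}) \<and>
                                          (\<forall>(i,j)\<in>{}. B $$ (i,j) = 0)}"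
    by (auto simp: SL_mod_def)
  then show ?thesis using card_mats_vanishing_on_le[of "{0..<int p}" "{}" n] finite_subset by auto
qed

lemma card_krylov_singular_down_shift_le:
  fixes B :: "int mat"
  assumes p: "prime p" and B: "B \<in> carrier_mat n n"
  shows "card {t \<in> {0..<int p}. int p dvd det (krylov_mat n (B + t \<cdot>\<^sub>m down_shift_mat n))}
           \<le> (\<Sum>j<n. j)"
proof -
  obtain q where "degree q \<le> (\<Sum>j<n. j)" and "coeff q (\<Sum>j<n. j) = 1"
    and "\<And>t. poly q t = det (krylov_mat n (B + t \<cdot>\<^sub>m down_shift_mat n))"
    using det_krylov_mat_add_down_shift_poly[OF B] by blast
  moreover have "\<not> int p dvd 1" using prime_gt_1_nat[OF p] by simp
  ultimately show ?thesis
    using card_roots_mod_prime_le_degree[OF p, of q "\<Sum>j<n. j"] by simp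
qed

lemma card_det_add_scalar_cong_1_le:
  fixes M :: "int mat"
  assumes p: "prime p" and n: "1 \<le> n" and M: "M \<in> carrier_mat n n"
  shows "card {s \<in> {0..<int p}. [det (M + s \<cdot>\<^sub>m 1\<^sub>m n) = 1] (mod int p)} \<le> n"
proof -
  define h where "h = char_poly (- M) - 1"
  have "degree (char_poly (- M)) = n" "coeff (char_poly (- M)) n = 1"
    using degree_monic_char_poly[of "- M" n] M by auto
  then have "degree h \<le> n" "coeff h n = 1"
    using n by (auto simp: h_def degree_diff_le)
  moreover have "\<not> int p dvd 1" using prime_gt_1_nat[OF p] by simp
  moreover have "[det (M + s \<cdot>\<^sub>m 1\<^sub>m n) = 1] (mod int p) \<longleftrightarrow> int p dvd poly h s" for s
    by (simp add: h_def det_add_scalar_eq_poly_char_poly[OF M] cong_iff_dvd_diff)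
  ultimately show ?thesis
    using card_roots_mod_prime_le_degree[OF p, of h n] by simp
qed

lemma card_shift_params_le:
  fixes B :: "int mat"
  assumes p: "prime p" and n: "1 \<le> n" and B: "B \<in> carrier_mat n n"
  shows "card {(s,t). s \<in> {0..<int p} \<and> t \<in> {0..<int p} \<and>
      int p dvd det (krylov_mat n (B + t \<cdot>\<^sub>m down_shift_mat n + s \<cdot>\<^sub>m 1\<^sub>m n)) \<and>
      [det (B + t \<cdot>\<^sub>m down_shift_mat n + s \<cdot>\<^sub>m 1\<^sub>m n) = 1] (mod int p)} \<le> (\<Sum>j<n. j) * n"
    (is "card ?P \<le> _")
proof -
  define Z where "Z = {t \<in> {0..<int p}. int p dvd det (krylov_mat n (B + t \<cdot>\<^sub>m down_shift_mat n))}"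
  define R where "R t = {s \<in> {0..<int p}. [det (B + t \<cdot>\<^sub>m down_shift_mat n + s \<cdot>\<^sub>m 1\<^sub>m n) = 1] (mod int p)}" for t
  have Bt: "B + t \<cdot>\<^sub>m down_shift_mat n \<in> carrier_mat n n" for t using B by simp
  have "?P \<subseteq> (\<Union>t\<in>Z. (\<lambda>s. (s,t)) ` R t)"
    by (auto simp: Z_def R_def det_krylov_mat_add_scalar[OF Bt])
  moreover have "finite Z" "finite (R t)" for t
    by (rule finite_subset[of _ "{0..<int p}"]; auto simp: Z_def R_def)+
  ultimately have "card ?P \<le> card (\<Union>t\<in>Z. (\<lambda>s. (s,t)) ` R t)"
    by (intro card_mono) auto
  also have "\<dots> \<le> (\<Sum>t\<in>Z. card ((\<lambda>s. (s,t)) ` R t))"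
    by (rule card_UN_le[OF \<open>finite Z\<close>])
  also have "\<dots> \<le> (\<Sum>t\<in>Z. n)"
  proof (rule sum_mono)
    fix t
    have "card ((\<lambda>s. (s,t)) ` R t) \<le> card (R t)" by (rule card_image_le[OF \<open>finite (R t)\<close>])
    also have "\<dots> \<le> n" unfolding R_def by (rule card_det_add_scalar_cong_1_le[OF p n Bt])
    finally show "card ((\<lambda>s. (s,t)) ` R t) \<le> n" .
  qed
  also have "\<dots> \<le> (\<Sum>j<n. j) * n"
    using card_krylov_singular_down_shift_le[OF p B] by (simp add: Z_def)
  finally show ?thesis .
qed

definition shift_base :: "nat \<Rightarrow> int \<Rightarrow> int mat \<Rightarrow> int mat" where
  "shift_base n m A = mat n n (\<lambda>(i,j). (A $$ (i,j) - (if i = Suc j then A $$ (1,0) else 0)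
                                          - (if i = j then A $$ (0,0) else 0)) mod m)"

lemma mat_cong_shift_base:
  assumes "A \<in> carrier_mat n n"
  shows "mat_cong m (shift_base n m A + A $$ (1,0) \<cdot>\<^sub>m down_shift_mat n + A $$ (0,0) \<cdot>\<^sub>m 1\<^sub>m n) A"
proof -
  have mod_cancel: "[(x - y) mod m + y = x] (mod m)" for x y :: int
    using cong_add[OF cong_mod_leftI[OF cong_refl[of "x - y"]] cong_refl[of y]] by simp
  show ?thesis
    using assms by (intro mat_congI) (auto simp: shift_base_def down_shift_mat_def mod_cancel)
qed

lemma SL_krylov_singular_shift_base:
  assumes A: "A \<in> SL_mod n p" and singular: "int p dvd det (krylov_mat n A)"
  defines "A' \<equiv> shift_base n (int p) A + A $$ (1,0) \<cdot>\<^sub>m down_shift_mat n + A $$ (0,0) \<cdot>\<^sub>m 1\<^sub>m n"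
  shows "int p dvd det (krylov_mat n A') \<and> [det A' = 1] (mod int p)"
proof -
  have carrier: "A \<in> carrier_mat n n" "A' \<in> carrier_mat n n"
    using A by (auto simp: SL_mod_def A'_def shift_base_def)
  have cong: "mat_cong (int p) A' A" unfolding A'_def by (rule mat_cong_shift_base[OF carrier(1)])
  have "[det (krylov_mat n A') = det (krylov_mat n A)] (mod int p)"
    by (rule mat_cong_det[OF krylov_mat_carrier mat_cong_krylov_mat[OF carrier(2) cong]])
  moreover have "[det A' = det A] (mod int p)" by (rule mat_cong_det[OF carrier(2) cong])
  ultimately show ?thesis
    using A singular by (auto simp: SL_mod_def cong_dvd_iff intro: cong_trans)
qed

lemma inj_on_shift_base:
  "inj_on (\<lambda>A. (shift_base n (int p) A, (A $$ (0,0), A $$ (1,0)))) (SL_mod n p)"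
proof (rule inj_onI)
  fix A A' assume A: "A \<in> SL_mod n p" and A': "A' \<in> SL_mod n p"
    and eq: "(shift_base n (int p) A, (A $$ (0,0), A $$ (1,0))) = (shift_base n (int p) A', (A' $$ (0,0), A' $$ (1,0)))"
  have carrier: "A \<in> carrier_mat n n" "A' \<in> carrier_mat n n" using A A' by (auto simp: SL_mod_def)
  have "mat_cong (int p) A (shift_base n (int p) A + A $$ (1,0) \<cdot>\<^sub>m down_shift_mat n + A $$ (0,0) \<cdot>\<^sub>m 1\<^sub>m n)"
    by (rule mat_cong_sym[OF mat_cong_shift_base[OF carrier(1)]])
  also have "\<dots> = shift_base n (int p) A' + A' $$ (1,0) \<cdot>\<^sub>m down_shift_mat n + A' $$ (0,0) \<cdot>\<^sub>m 1\<^sub>m n"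
    using eq by simp
  also have "mat_cong (int p) \<dots> A'" by (rule mat_cong_shift_base[OF carrier(2)])
  finally show "A = A'" using A A' by (intro SL_mod_eq_of_mat_cong)
qed

lemma card_SL_krylov_singular_le:
  assumes n: "2 \<le> n" and p: "prime p"
  shows "card {A \<in> SL_mod n p. int p dvd det (krylov_mat n A)} \<le> p ^ (n * n - 2) * ((\<Sum>j<n. j) * n)"
proof -
  define S where "S = {A \<in> SL_mod n p. int p dvd det (krylov_mat n A)}"
  define V where "V = {0..<int p}"
  define Bs where "Bs = {B \<in> carrier_mat n n. (\<forall>i<n. \<forall>j<n. B $$ (i,j) \<in> V) \<and>
                          (\<forall>(i,j)\<in>{(0,0),(1,0)}. B $$ (i,j) = 0)}"
  define params where "params B = {(s,t). s \<in> V \<and> t \<in> V \<and>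
      int p dvd det (krylov_mat n (B + t \<cdot>\<^sub>m down_shift_mat n + s \<cdot>\<^sub>m 1\<^sub>m n)) \<and>
      [det (B + t \<cdot>\<^sub>m down_shift_mat n + s \<cdot>\<^sub>m 1\<^sub>m n) = 1] (mod int p)}" for B
  have "inj_on (\<lambda>A. (shift_base n (int p) A, (A $$ (0,0), A $$ (1,0)))) S"
    using inj_on_shift_base by (rule inj_on_subset) (simp add: S_def)
  moreover have "(\<lambda>A. (shift_base n (int p) A, (A $$ (0,0), A $$ (1,0)))) ` S \<subseteq> Sigma Bs params"
  proof (rule image_subsetI)
    fix A assume A: "A \<in> S"
    have "0 < int p" using prime_gt_0_nat[OF p] by simp
    with n have "shift_base n (int p) A \<in> Bs" by (auto simp: Bs_def shift_base_def V_def)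
    moreover have "(A $$ (0,0), A $$ (1,0)) \<in> params (shift_base n (int p) A)"
      using SL_krylov_singular_shift_base[of A n p] A n by (auto simp: S_def SL_mod_def params_def V_def)
    ultimately show "(shift_base n (int p) A, (A $$ (0,0), A $$ (1,0))) \<in> Sigma Bs params" by simp
  qed
  moreover have Bs: "finite Bs \<and> card Bs \<le> p ^ (n * n - 2)"
    using card_mats_vanishing_on_le[of V "{(0,0),(1,0)}" n] n by (simp add: V_def Bs_def numeral_2_eq_2)
  moreover have "finite (params B)" for B
    by (rule finite_subset[of _ "V \<times> V"]) (auto simp: params_def V_def)
  ultimately have "card S \<le> card (Sigma Bs params)"
    by (intro card_inj_on_le) auto
  also have "\<dots> = (\<Sum>B\<in>Bs. card (params B))"
    using Bs \<open>\<And>B. finite (params B)\<close> by (intro card_SigmaI) auto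
  also have "\<dots> \<le> (\<Sum>B\<in>Bs. (\<Sum>j<n. j) * n)"
  proof (rule sum_mono)
    fix B assume "B \<in> Bs"
    then have B: "B \<in> carrier_mat n n" by (simp add: Bs_def)
    show "card (params B) \<le> (\<Sum>j<n. j) * n"
      unfolding params_def V_def by (rule card_shift_params_le[OF p _ B]) (use n in simp)
  qed
  also have "\<dots> \<le> p ^ (n * n - 2) * ((\<Sum>j<n. j) * n)" using Bs by simp
  finally show ?thesis by (simp add: S_def)
qed

lemma card_X_set_le:
  assumes n: "2 \<le> n" and p: "prime p"
  shows "card (X_set n p) \<le> ((n - 1) + (\<Sum>j<n. j) * n) * p ^ (n * n - 2)"
proof -
  let ?G = "{A \<in> X_set n p. \<not> int p dvd det (krylov_mat n A)}"
  let ?T = "{A \<in> SL_mod n p. int p dvd det (krylov_mat n A)}"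
  have "card (X_set n p) \<le> card (?G \<union> ?T)"
    by (intro card_mono finite_subset[OF _ finite_SL_mod]) (auto simp: X_set_def)
  also have "\<dots> \<le> card ?G + card ?T" by (rule card_Un_le)
  also have "\<dots> \<le> ((n - 1) + (\<Sum>j<n. j) * n) * p ^ (n * n - 2)"
    using card_X_set_krylov_invertible_le[OF n p] card_SL_krylov_singular_le[OF n p]
    by (simp add: algebra_simps)
  finally show ?thesis .
qed

lemma smallo_Suc_power_of_bounded:
  fixes f :: "nat \<Rightarrow> real"
  assumes F: "F \<le> at_top" and bound: "\<forall>\<^sub>F p in F. \<bar>f p\<bar> \<le> C * real p ^ k"
  shows "f \<in> o[F](\<lambda>p. real p ^ Suc k)"
proof -
  have "f \<in> O[F](\<lambda>p. real p ^ k)"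
    using bound by (intro bigoI[of _ C]) (auto elim!: eventually_mono)
  moreover have "(\<lambda>p. real p ^ k) \<in> o[F](\<lambda>p. real p ^ Suc k)"
    by (rule landau_o.small.filter_mono[OF F]) real_asymp
  ultimately show ?thesis by (rule landau_o.big_small_trans)
qed

theorem lemma6p1:
  fixes n :: nat
  assumes "n \<ge> 2"
  shows "(\<lambda>p. real (card (X_set n p))) \<in>
           o[inf at_top (principal {p::nat. prime p})](\<lambda>p. real p ^ (n\<^sup>2 - 1))"
proof -
  define C where "C = (n - 1) + (\<Sum>j<n. j) * n"
  have "card (X_set n p) \<le> C * p ^ (n * n - 2)" if "prime p" for p
    using card_X_set_le[OF assms that] by (simp add: C_def)
  then have bound: "\<forall>\<^sub>F p in inf at_top (principal {p. prime p}).
      \<bar>real (card (X_set n p))\<bar> \<le> real C * real p ^ (n * n - 2)"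
    unfolding eventually_inf_principal
    by (intro always_eventually allI impI) (simp flip: of_nat_power of_nat_mult)
  have "n\<^sup>2 - 1 = Suc (n * n - 2)"
    using mult_le_mono[OF assms assms] by (simp add: power2_eq_square)
  then show ?thesis using smallo_Suc_power_of_bounded[OF inf_le1 bound] by simp
qed

end
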